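(* Let $G$ be the $3$-uniform tight cycle ($k=3$, $s=2$) with $n$ vertices. Then the maximum degree of $G$ is $\Delta=3$. When $n=4$, $\lambda(\mathcal{L})=4$. When $n\ge 5$, $\lambda(\mathcal{L})\le\Delta+1.5=4.5$.
   Context: A $k$-uniform $s$-cycle with $m$ edges has vertex set $\mathbb{Z}_n$, $n=m(k-s)$ (vertex $n+i$ identified with $i$), and edges $e_j=\{j(k-s)+1,\ldots,j(k-s)+k\}$, $j=0,\ldots,m-1$; it is assumed that $n\ge 2k-s$. For $k=3,s=2$ this means vertex set $\mathbb{Z}_n$, $n\ge 4$, with edges $\{j+1,j+2,j+3\}$ for $j=0,\ldots,n-1$. The degree $d_i$ of a vertex is the number of edges containing it. A Laplacian H-eigenvalue of $G$ is a real $\lambda$ for which there exists $\mathbf{x}\in\mathbb{R}^n\setminus\{0\}$ with $\lambda x_i^{k-1}=d_ix_i^{k-1}-\sum_{e\ni i}\prod_{j\in e\setminus\{i\}}x_j$ for all $i$ (equivalently, an H-eigenvalue of the Laplacian tensor $\mathcal{L}=\mathcal{D}-\mathcal{A}$, with $\mathcal{A}$ the adjacency tensor having entries $1/(k-1)!$ on edges and $\mathcal{D}$ the diagonal degree tensor); $\lambda(\mathcal{L})$ is the largest Laplacian H-eigenvalue. *)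

theory Defs
  imports Complex_Main
begin

text \<open>The 3-uniform tight cycle (k = 3, s = 2) on vertex set Z_n, represented by
  {0..<n}; edge j is {j+1, j+2, j+3} taken mod n, for j = 0, ..., n-1.\<close>

definition tc_edge :: "nat \<Rightarrow> nat \<Rightarrow> nat set" where
  "tc_edge n j = {(j + 1) mod n, (j + 2) mod n, (j + 3) mod n}"

definition tc_edges :: "nat \<Rightarrow> nat set set" where
  "tc_edges n = tc_edge n ` {0..<n}"

definition tc_degree :: "nat \<Rightarrow> nat \<Rightarrow> nat" where
  "tc_degree n i = card {e \<in> tc_edges n. i \<in> e}"

definition tc_max_degree :: "nat \<Rightarrow> nat" where
  "tc_max_degree n = Max (tc_degree n ` {0..<n})"

text \<open>Laplacian H-eigenvalue (k = 3, so x_i^(k-1) = x_i^2).\<close>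
definition tc_lap_H_eig :: "nat \<Rightarrow> real \<Rightarrow> bool" where
  "tc_lap_H_eig n lam \<longleftrightarrow>
     (\<exists>x :: nat \<Rightarrow> real. (\<exists>i<n. x i \<noteq> 0) \<and>
        (\<forall>i<n. lam * x i ^ 2 =
           real (tc_degree n i) * x i ^ 2
           - (\<Sum>e\<in>{e \<in> tc_edges n. i \<in> e}. \<Prod>j\<in>e - {i}. x j)))"

text \<open>Largest Laplacian H-eigenvalue (the set is finite and nonempty, so Sup is its maximum).\<close>
definition tc_lambda_L :: "nat \<Rightarrow> real" where
  "tc_lambda_L n = Sup {lam. tc_lap_H_eig n lam}"

end

theory Submission
  imports Defs "HOL-Number_Theory.Cong"
begin

text \<open>Every vertex i lies in exactly the three edges {i-2,i-1,i}, {i-1,i,i+1}, {i,i+1,i+2}, so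
  the eigen-equation at i reads (\<lambda> - 3) x(i)^2 = -(x(i-2) x(i-1) + x(i-1) x(i+1) + x(i+1) x(i+2)).
  Scale an eigenvector so that an entry of largest modulus is x(i) = 1.
  For n = 4 the right-hand side is minus the sum of the pairwise products of the three other
  entries, which is at least -1; so \<lambda> \<le> 4, attained by (1,1,-1,-1).
  For n \<ge> 5 put \<mu> = \<lambda> - 3 > 0. If x(i-1) and x(i+1) have equal signs, then \<mu> \<le> 1.
  Otherwise, say x(i-1) < 0 < x(i+1), the equation at i-1 forces -x(i-2) \<ge> x(i+1)/2, and then
  \<mu> \<le> x(i+1) (1 - x(i-1)/2) \<le> 3/2.\<close>

lemma add_mod_left_neq:
  fixes i p q n :: nat
  assumes "p < n" "q < n" "p \<noteq> q"
  shows "(i + p) mod n \<noteq> (i + q) mod n"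
  using assms cong_add_lcancel_nat[of i p q n] unfolding cong_def by simp

lemma mod_add_diff_mod:
  fixes a k n :: nat
  assumes "k \<le> n"
  shows "(a mod n + n - k) mod n = (a + n - k) mod n"
  using assms by (metis Nat.add_diff_assoc mod_add_left_eq)

lemma tc_edge_mod: "tc_edge n (j mod n) = tc_edge n j"
  unfolding tc_edge_def by (simp only: mod_add_left_eq)

lemma tc_edges_through:
  assumes "n \<ge> 3" "i < n"
  shows "tc_edge n ((i+n-3) mod n) = {(i+n-2) mod n, (i+n-1) mod n, i}"
    and "tc_edge n ((i+n-2) mod n) = {(i+n-1) mod n, i, (i+1) mod n}"
    and "tc_edge n ((i+n-1) mod n) = {i, (i+1) mod n, (i+2) mod n}"
proof -
  have "i+n-3+1 = i+n-2" "i+n-3+2 = i+n-1" "i+n-3+3 = i+n"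
    "i+n-2+1 = i+n-1" "i+n-2+2 = i+n" "i+n-2+3 = (i+1)+n"
    "i+n-1+1 = i+n" "i+n-1+2 = (i+1)+n" "i+n-1+3 = (i+2)+n"
    using assms by auto
  moreover have "(i+n) mod n = i" using assms by simp
  ultimately show "tc_edge n ((i+n-3) mod n) = {(i+n-2) mod n, (i+n-1) mod n, i}"
    and "tc_edge n ((i+n-2) mod n) = {(i+n-1) mod n, i, (i+1) mod n}"
    and "tc_edge n ((i+n-1) mod n) = {i, (i+1) mod n, (i+2) mod n}"
    unfolding tc_edge_mod by (simp_all only: tc_edge_def mod_add_self2)
qed

lemma tc_edge_index_if_mem:
  assumes "n \<ge> 3" "j < n" "i \<in> tc_edge n j"
  shows "j \<in> {(i+n-3) mod n, (i+n-2) mod n, (i+n-1) mod n}"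
proof -
  have shift_back: "((j+k) mod n + n - k) mod n = j" if "k \<le> n" for k
  proof -
    have "((j+k) mod n + n - k) mod n = (j+k+n-k) mod n" using that by (rule mod_add_diff_mod)
    also have "\<dots> = j" using that \<open>j < n\<close> by simp
    finally show ?thesis .
  qed
  from assms(3) consider "i = (j+1) mod n" | "i = (j+2) mod n" | "i = (j+3) mod n"
    unfolding tc_edge_def by blast
  then show ?thesis using shift_back[of 1] shift_back[of 2] shift_back[of 3] assms(1) by cases auto
qed

lemma tc_edges_containing:
  assumes "n \<ge> 3" "i < n"
  shows "{e \<in> tc_edges n. i \<in> e} =
    {{(i+n-2) mod n, (i+n-1) mod n, i}, {(i+n-1) mod n, i, (i+1) mod n}, {i, (i+1) mod n, (i+2) mod n}}"
    (is "?L = ?R")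
proof
  show "?L \<subseteq> ?R"
  proof
    fix e assume "e \<in> ?L"
    then obtain j where "j < n" "i \<in> tc_edge n j" and e: "e = tc_edge n j"
      unfolding tc_edges_def by auto
    then have "j \<in> {(i+n-3) mod n, (i+n-2) mod n, (i+n-1) mod n}"
      by (intro tc_edge_index_if_mem[OF assms(1)])
    then show "e \<in> ?R" unfolding e
      by (elim insertE emptyE) (simp_all only: tc_edges_through[OF assms] insert_iff simp_thms)
  qed
  have "?R = tc_edge n ` {(i+n-3) mod n, (i+n-2) mod n, (i+n-1) mod n}"
    by (simp only: image_insert image_empty tc_edges_through[OF assms])
  also have "\<dots> \<subseteq> tc_edges n"
    unfolding tc_edges_def using assms by (intro image_mono) auto
  finally show "?R \<subseteq> ?L" by auto
qed

lemma tc_neighbours_distinct: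
  fixes n i :: nat
  assumes "n \<ge> 4" "i < n"
  shows "(i+n-2) mod n \<noteq> (i+n-1) mod n" "(i+n-2) mod n \<noteq> i" "(i+n-2) mod n \<noteq> (i+1) mod n"
    "(i+n-1) mod n \<noteq> i" "(i+n-1) mod n \<noteq> (i+1) mod n" "(i+n-1) mod n \<noteq> (i+2) mod n"
    "(i+1) mod n \<noteq> i" "(i+2) mod n \<noteq> i" "(i+1) mod n \<noteq> (i+2) mod n"
proof -
  have ne_i: "(i + p) mod n \<noteq> i" if "0 < p" "p < n" for p
    using add_mod_left_neq[of p n 0 i] that assms(2) by simp
  have m2: "i+n-2 = i+(n-2)" and m1: "i+n-1 = i+(n-1)" using assms by auto
  show "(i+n-2) mod n \<noteq> (i+n-1) mod n" unfolding m1 m2 by (rule add_mod_left_neq) (use assms in linarith)+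
  show "(i+n-2) mod n \<noteq> i" unfolding m2 by (rule ne_i) (use assms in linarith)+
  show "(i+n-2) mod n \<noteq> (i+1) mod n" unfolding m2 by (rule add_mod_left_neq) (use assms in linarith)+
  show "(i+n-1) mod n \<noteq> i" unfolding m1 by (rule ne_i) (use assms in linarith)+
  show "(i+n-1) mod n \<noteq> (i+1) mod n" unfolding m1 by (rule add_mod_left_neq) (use assms in linarith)+
  show "(i+n-1) mod n \<noteq> (i+2) mod n" unfolding m1 by (rule add_mod_left_neq) (use assms in linarith)+
  show "(i+1) mod n \<noteq> i" by (rule ne_i) (use assms in linarith)+
  show "(i+2) mod n \<noteq> i" by (rule ne_i) (use assms in linarith)+
  show "(i+1) mod n \<noteq> (i+2) mod n" by (rule add_mod_left_neq) (use assms in linarith)+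
qed

lemma tc_edges_containing_distinct:
  fixes n i :: nat
  assumes "n \<ge> 4" "i < n"
  shows "{(i+n-2) mod n, (i+n-1) mod n, i} \<noteq> {(i+n-1) mod n, i, (i+1) mod n}"
    and "{(i+n-2) mod n, (i+n-1) mod n, i} \<noteq> {i, (i+1) mod n, (i+2) mod n}"
    and "{(i+n-1) mod n, i, (i+1) mod n} \<noteq> {i, (i+1) mod n, (i+2) mod n}"
proof -
  note d = tc_neighbours_distinct[OF assms]
  have "(i+n-2) mod n \<notin> {(i+n-1) mod n, i, (i+1) mod n}"
    "(i+n-1) mod n \<notin> {i, (i+1) mod n, (i+2) mod n}"
    using d by simp_all
  then show "{(i+n-2) mod n, (i+n-1) mod n, i} \<noteq> {(i+n-1) mod n, i, (i+1) mod n}"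
    and "{(i+n-2) mod n, (i+n-1) mod n, i} \<noteq> {i, (i+1) mod n, (i+2) mod n}"
    and "{(i+n-1) mod n, i, (i+1) mod n} \<noteq> {i, (i+1) mod n, (i+2) mod n}"
    by blast+
qed

lemma tc_degree_eq_3:
  assumes "n \<ge> 4" "i < n"
  shows "tc_degree n i = 3"
proof -
  have "n \<ge> 3" using assms by simp
  then show ?thesis using tc_edges_containing_distinct[OF assms]
    unfolding tc_degree_def tc_edges_containing[OF \<open>n \<ge> 3\<close> assms(2)] by simp
qed

lemma tc_max_degree_eq_3:
  assumes "n \<ge> 4"
  shows "tc_max_degree n = 3"
proof -
  have "tc_degree n ` {0..<n} = {3}"
    using assms tc_degree_eq_3[OF assms] by (auto intro!: image_eqI[of 3 _ 0])
  then show ?thesis unfolding tc_max_degree_def by simp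
qed

text \<open>Vertex i - k of Z_n is written (i + n - k) mod n, avoiding truncated subtraction.\<close>

definition tc_link_sum :: "(nat \<Rightarrow> real) \<Rightarrow> nat \<Rightarrow> nat \<Rightarrow> real" where
  "tc_link_sum x n i = x ((i+n-2) mod n) * x ((i+n-1) mod n) + x ((i+n-1) mod n) * x ((i+1) mod n)
     + x ((i+1) mod n) * x ((i+2) mod n)"

lemma sum_tc_edges_containing:
  assumes "n \<ge> 4" "i < n"
  shows "(\<Sum>e\<in>{e \<in> tc_edges n. i \<in> e}. \<Prod>j\<in>e - {i}. x j) = tc_link_sum x n i"
proof -
  note d = tc_neighbours_distinct[OF assms]
  have sum3: "sum g {A, B, C} = g A + g B + g C" if "A \<noteq> B" "A \<noteq> C" "B \<noteq> C"
    for g :: "nat set \<Rightarrow> real" and A B C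
    using that by simp
  have prod2: "prod x {p, q} = x p * x q" if "p \<noteq> q" for p q
    using that by simp
  have "n \<ge> 3" using assms by simp
  have "{(i+n-2) mod n, (i+n-1) mod n, i} - {i} = {(i+n-2) mod n, (i+n-1) mod n}"
    "{(i+n-1) mod n, i, (i+1) mod n} - {i} = {(i+n-1) mod n, (i+1) mod n}"
    "{i, (i+1) mod n, (i+2) mod n} - {i} = {(i+1) mod n, (i+2) mod n}"
    using d by auto
  then show ?thesis
    unfolding tc_edges_containing[OF \<open>n \<ge> 3\<close> assms(2)] tc_link_sum_def
      sum3[OF tc_edges_containing_distinct[OF assms]]
    by (simp only: prod2 d not_False_eq_True)
qed

lemma tc_lap_H_eig_iff:
  assumes "n \<ge> 4"
  shows "tc_lap_H_eig n lam \<longleftrightarrow>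
    (\<exists>x. (\<exists>i<n. x i \<noteq> 0) \<and> (\<forall>i<n. lam * x i ^ 2 = 3 * x i ^ 2 - tc_link_sum x n i))"
  unfolding tc_lap_H_eig_def using tc_degree_eq_3[OF assms] sum_tc_edges_containing[OF assms] by simp

lemma tc_link_sum_scale: "tc_link_sum (\<lambda>j. c * x j) n i = c\<^sup>2 * tc_link_sum x n i"
  unfolding tc_link_sum_def by (simp add: algebra_simps power2_eq_square)

lemma tc_lap_H_eig_normalized_eigvec:
  assumes "n \<ge> 4" "tc_lap_H_eig n lam"
  obtains y i where "i < n" "y i = 1" "\<forall>j<n. \<bar>y j\<bar> \<le> 1"
    "\<forall>j<n. lam * y j ^ 2 = 3 * y j ^ 2 - tc_link_sum y n j"
proof -
  obtain x k where "k < n" "x k \<noteq> 0" and eq: "\<forall>j<n. lam * x j ^ 2 = 3 * x j ^ 2 - tc_link_sum x n j"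
    using assms(2) unfolding tc_lap_H_eig_iff[OF assms(1)] by blast
  obtain i where i: "i < n" and i_max: "Max ((\<lambda>j. \<bar>x j\<bar>) ` {..<n}) = \<bar>x i\<bar>"
    using obtains_MAX[of "{..<n}"] \<open>k < n\<close> by blast
  have max: "\<forall>j<n. \<bar>x j\<bar> \<le> \<bar>x i\<bar>"
    unfolding i_max[symmetric] by simp
  have "x i \<noteq> 0" using max \<open>k < n\<close> \<open>x k \<noteq> 0\<close> by fastforce
  define y where "y j = x j / x i" for j
  have "y i = 1" using \<open>x i \<noteq> 0\<close> unfolding y_def by simp
  moreover have "\<forall>j<n. \<bar>y j\<bar> \<le> 1"
    using max \<open>x i \<noteq> 0\<close> unfolding y_def by (simp add: abs_divide divide_le_eq_1)
  moreover have "\<forall>j<n. lam * y j ^ 2 = 3 * y j ^ 2 - tc_link_sum y n j"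
  proof (intro allI impI)
    fix j assume "j < n"
    have "tc_link_sum y n j = tc_link_sum x n j / (x i)\<^sup>2"
      using tc_link_sum_scale[of "1 / x i" x n j] unfolding y_def by (simp add: power_divide)
    moreover have "y j ^ 2 = x j ^ 2 / x i ^ 2" unfolding y_def by (rule power_divide)
    moreover have "lam * x j ^ 2 / x i ^ 2 = 3 * x j ^ 2 / x i ^ 2 - tc_link_sum x n j / x i ^ 2"
      using eq \<open>j < n\<close> by (simp add: diff_divide_distrib)
    ultimately show "lam * y j ^ 2 = 3 * y j ^ 2 - tc_link_sum y n j" by simp
  qed
  ultimately show ?thesis using i by (intro that)
qed

lemma pairwise_products_ge_neg_one:
  fixes a b c :: real
  assumes "\<bar>a\<bar> \<le> 1" "\<bar>b\<bar> \<le> 1" "\<bar>c\<bar> \<le> 1"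
  shows "a*b + b*c + c*a \<ge> -1"
proof -
  have "(1+a)*(1+b)*(1+c) \<ge> 0" "(1-a)*(1-b)*(1-c) \<ge> 0"
    using assms by (simp_all add: abs_le_iff)
  then have "0 \<le> (1+a)*(1+b)*(1+c) + (1-a)*(1-b)*(1-c)" by simp
  also have "\<dots> = 2 * (1 + (a*b + b*c + c*a))" by (simp add: algebra_simps)
  finally show ?thesis by simp
qed

lemma tc_lap_H_eig_4_le_4:
  assumes "tc_lap_H_eig 4 lam"
  shows "lam \<le> 4"
proof -
  obtain y i where "i < 4" "y i = 1" and bound: "\<forall>j<4. \<bar>y j\<bar> \<le> 1"
    and eq: "\<forall>j<4. lam * y j ^ 2 = 3 * y j ^ 2 - tc_link_sum y 4 j"
    by (rule tc_lap_H_eig_normalized_eigvec[OF order_refl assms])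
  have "i+4-2 = i+2" "i+4-1 = i+3" by simp_all
  then have "tc_link_sum y 4 i = y ((i+2) mod 4) * y ((i+3) mod 4)
      + y ((i+3) mod 4) * y ((i+1) mod 4) + y ((i+1) mod 4) * y ((i+2) mod 4)"
    unfolding tc_link_sum_def by (simp only:)
  also have "\<dots> \<ge> -1"
    using bound by (intro pairwise_products_ge_neg_one) simp_all
  finally have "tc_link_sum y 4 i \<ge> -1" .
  moreover have "lam * y i ^ 2 = 3 * y i ^ 2 - tc_link_sum y 4 i" using eq \<open>i < 4\<close> by blast
  ultimately show ?thesis using \<open>y i = 1\<close> by simp
qed

lemma tc_lap_H_eig_4_4: "tc_lap_H_eig 4 4"
proof -
  define x :: "nat \<Rightarrow> real" where "x j = (if j < 2 then 1 else -1)" for j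
  have "\<forall>i<4. 4 * x i ^ 2 = 3 * x i ^ 2 - tc_link_sum x 4 i"
  proof (intro allI impI)
    fix i :: nat assume "i < 4"
    then consider "i = 0" | "i = 1" | "i = 2" | "i = 3" by linarith
    then show "4 * x i ^ 2 = 3 * x i ^ 2 - tc_link_sum x 4 i"
      by cases (simp_all add: tc_link_sum_def x_def)
  qed
  moreover have "\<exists>i<4. x i \<noteq> 0" by (rule exI[of _ 0]) (simp add: x_def)
  ultimately show ?thesis unfolding tc_lap_H_eig_iff[OF order_refl] by (intro exI[of _ x]) simp
qed

lemma tc_lap_H_eig_0:
  assumes "n \<ge> 4"
  shows "tc_lap_H_eig n 0"
  unfolding tc_lap_H_eig_iff[OF assms]
proof (intro exI[of _ "\<lambda>_. 1"] conjI)
  show "\<exists>i<n. (1::real) \<noteq> 0" using assms by (intro exI[of _ 0]) simp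
  show "\<forall>i<n. 0 * 1 ^ 2 = 3 * 1 ^ 2 - tc_link_sum (\<lambda>_. 1) n i"
    by (simp add: tc_link_sum_def)
qed

lemma three_halves_bound_opposite_signs:
  fixes a b c d e \<mu> :: real
  assumes "\<bar>a\<bar> \<le> 1" "\<bar>b\<bar> \<le> 1" "\<bar>c\<bar> \<le> 1" "\<bar>d\<bar> \<le> 1" "\<bar>e\<bar> \<le> 1"
    and "b < 0" "c > 0" "\<mu> \<ge> 0"
    and \<mu>: "\<mu> = -(a*b + b*c + c*d)" and \<mu>_b: "\<mu> * b^2 = -(e*a + a + c)"
  shows "\<mu> \<le> 3/2"
proof -
  have "\<mu> * b^2 \<ge> 0" using \<open>\<mu> \<ge> 0\<close> by simp
  then have a_large: "-a * (1 + e) \<ge> c" using \<mu>_b by (simp add: algebra_simps)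
  have "-a > 0"
  proof (rule ccontr)
    assume "\<not> -a > 0"
    then have "-a * (1 + e) \<le> 0" using assms(5) by (intro mult_nonpos_nonneg) auto
    then show False using a_large \<open>c > 0\<close> by linarith
  qed
  then have "-a * (1 + e) \<le> -a * 2" using assms(5) by (intro mult_left_mono) auto
  then have "-a \<ge> c / 2" using a_large by linarith
  then have "-a * b \<le> c / 2 * b" using \<open>b < 0\<close> by (intro mult_right_mono_neg) auto
  moreover have "-c * d \<le> c" using assms(4) \<open>c > 0\<close> mult_left_mono[of "-d" 1 c] by simp
  moreover have "c * (1 - b/2) \<le> 1 * (3/2)"
    using assms(2,3) \<open>c > 0\<close> by (intro mult_mono) auto
  ultimately show ?thesis using \<mu> by (simp add: algebra_simps)
qed

lemma three_halves_bound:
  fixes a b c d e f \<mu> :: real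
  assumes "\<bar>a\<bar> \<le> 1" "\<bar>b\<bar> \<le> 1" "\<bar>c\<bar> \<le> 1" "\<bar>d\<bar> \<le> 1" "\<bar>e\<bar> \<le> 1" "\<bar>f\<bar> \<le> 1"
    and \<mu>: "\<mu> = -(a*b + b*c + c*d)"
    and \<mu>_b: "\<mu> * b^2 = -(e*a + a + c)" and \<mu>_c: "\<mu> * c^2 = -(b + d + d*f)"
  shows "\<mu> \<le> 3/2"
proof (cases "\<mu> \<ge> 0")
  case True
  consider "b * c \<ge> 0" | "b < 0" "c > 0" | "c < 0" "b > 0"
    using zero_le_mult_iff[of b c] by linarith
  then show ?thesis
  proof cases
    case 1
    have "-a * b \<le> \<bar>a\<bar> * \<bar>b\<bar>" "-c * d \<le> \<bar>c\<bar> * \<bar>d\<bar>"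
      by (metis abs_ge_minus_self abs_mult minus_mult_left)+
    moreover have "\<bar>a\<bar> * \<bar>b\<bar> \<le> \<bar>b\<bar>" "\<bar>c\<bar> * \<bar>d\<bar> \<le> \<bar>c\<bar>"
      using assms(1,4) mult_right_mono[of "\<bar>a\<bar>" 1 "\<bar>b\<bar>"] mult_left_mono[of "\<bar>d\<bar>" 1 "\<bar>c\<bar>"]
      by simp_all
    moreover have "b * c = \<bar>b\<bar> * \<bar>c\<bar>" using 1 by (metis abs_mult abs_of_nonneg)
    moreover have "(1 - \<bar>b\<bar>) * (1 - \<bar>c\<bar>) \<ge> 0" using assms(2,3) by simp
    ultimately show ?thesis using \<mu> by (simp add: algebra_simps)
  next
    case 2
    with assms(1-5) True \<mu> \<mu>_b show ?thesis by (intro three_halves_bound_opposite_signs)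
  next
    case 3 \<comment> \<open>mirror image of case 2 under the reflection i \<mapsto> -i\<close>
    have "\<mu> = -(d*c + c*b + b*a)" "\<mu> * c^2 = -(f*d + d + b)" using \<mu> \<mu>_c by (simp_all add: algebra_simps)
    with assms(1-4,6) 3 True show ?thesis by (intro three_halves_bound_opposite_signs[of d c b a f])
  qed
qed simp

lemma tc_link_sum_pred:
  assumes "n \<ge> 3" "i < n"
  shows "tc_link_sum x n ((i+n-1) mod n) = x ((i+n-3) mod n) * x ((i+n-2) mod n)
      + x ((i+n-2) mod n) * x i + x i * x ((i+1) mod n)"
proof -
  have "i+n-1+n-2 = (i+n-3)+n" "i+n-1+n-1 = (i+n-2)+n" "i+n-1+1 = i+n" "i+n-1+2 = (i+1)+n"
    "(i+n) mod n = i" "1 \<le> n" "2 \<le> n"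
    using assms by auto
  then show ?thesis unfolding tc_link_sum_def
    by (simp only: mod_add_diff_mod mod_add_left_eq mod_add_self2)
qed

lemma tc_link_sum_succ:
  assumes "n \<ge> 3" "i < n"
  shows "tc_link_sum x n ((i+1) mod n) = x ((i+n-1) mod n) * x i
      + x i * x ((i+2) mod n) + x ((i+2) mod n) * x ((i+3) mod n)"
proof -
  have "i+1+n-2 = i+n-1" "i+1+n-1 = i+n" "i+1+1 = i+2" "i+1+2 = i+3"
    "(i+n) mod n = i" "1 \<le> n" "2 \<le> n"
    using assms by auto
  then show ?thesis unfolding tc_link_sum_def
    by (simp only: mod_add_diff_mod mod_add_left_eq)
qed

lemma tc_lap_H_eig_le_9_div_2:
  assumes "n \<ge> 5" "tc_lap_H_eig n lam"
  shows "lam \<le> 9/2"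
proof -
  have "n \<ge> 3" "n \<ge> 4" using assms(1) by simp_all
  obtain y i where "i < n" "y i = 1" and bound: "\<forall>j<n. \<bar>y j\<bar> \<le> 1"
    and eq: "\<forall>j<n. lam * y j ^ 2 = 3 * y j ^ 2 - tc_link_sum y n j"
    by (rule tc_lap_H_eig_normalized_eigvec[OF \<open>n \<ge> 4\<close> assms(2)])
  define a b c d e f where "a = y ((i+n-2) mod n)" "b = y ((i+n-1) mod n)" "c = y ((i+1) mod n)"
    "d = y ((i+2) mod n)" "e = y ((i+n-3) mod n)" "f = y ((i+3) mod n)"
  have "(i+n-k) mod n < n" "(i+k) mod n < n" for k using assms by simp_all
  then have "\<bar>a\<bar> \<le> 1" "\<bar>b\<bar> \<le> 1" "\<bar>c\<bar> \<le> 1" "\<bar>d\<bar> \<le> 1" "\<bar>e\<bar> \<le> 1" "\<bar>f\<bar> \<le> 1"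
    and eq_i: "lam * y i ^ 2 = 3 * y i ^ 2 - tc_link_sum y n i"
    and eq_b: "lam * b ^ 2 = 3 * b ^ 2 - tc_link_sum y n ((i+n-1) mod n)"
    and eq_c: "lam * c ^ 2 = 3 * c ^ 2 - tc_link_sum y n ((i+1) mod n)"
    unfolding a_b_c_d_e_f_def using bound eq \<open>i < n\<close> by blast+
  have "lam - 3 \<le> 3/2"
  proof (rule three_halves_bound)
    show "lam - 3 = -(a*b + b*c + c*d)"
      using eq_i \<open>y i = 1\<close> unfolding a_b_c_d_e_f_def tc_link_sum_def by simp
    have "tc_link_sum y n ((i+n-1) mod n) = e*a + a + c"
      unfolding tc_link_sum_pred[OF \<open>n \<ge> 3\<close> \<open>i < n\<close>] a_b_c_d_e_f_def \<open>y i = 1\<close> by simp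
    with eq_b show "(lam - 3) * b^2 = -(e*a + a + c)" by (simp add: left_diff_distrib)
    have "tc_link_sum y n ((i+1) mod n) = b + d + d*f"
      unfolding tc_link_sum_succ[OF \<open>n \<ge> 3\<close> \<open>i < n\<close>] a_b_c_d_e_f_def \<open>y i = 1\<close> by simp
    with eq_c show "(lam - 3) * c^2 = -(b + d + d*f)" by (simp add: left_diff_distrib)
  qed fact+
  then show ?thesis by simp
qed

theorem proposition8p2:
  fixes n :: nat
  assumes "n \<ge> 4"
  shows "tc_max_degree n = 3 \<and>
         (n = 4 \<longrightarrow> tc_lambda_L n = 4) \<and>
         (n \<ge> 5 \<longrightarrow> tc_lambda_L n \<le> 4.5)"
proof (intro conjI impI)
  show "tc_max_degree n = 3" using tc_max_degree_eq_3[OF assms] .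
next
  assume "n = 4"
  then show "tc_lambda_L n = 4" unfolding tc_lambda_L_def
    by (intro cSup_eq_maximum) (use tc_lap_H_eig_4_4 tc_lap_H_eig_4_le_4 in auto)
next
  assume "n \<ge> 5"
  \<comment> \<open>0 is an eigenvalue, so the set is nonempty and its Sup is a genuine supremum\<close>
  have "Sup {lam. tc_lap_H_eig n lam} \<le> 9/2"
    by (rule cSup_least) (use tc_lap_H_eig_0[OF assms] tc_lap_H_eig_le_9_div_2[OF \<open>n \<ge> 5\<close>] in auto)
  then show "tc_lambda_L n \<le> 4.5" unfolding tc_lambda_L_def by simp
qed

end
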